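(* Let $n\in\mathbb{N}\cup\{\infty\}$ and let $\{J(t)\}_{t\ge0}$ be a stochastic process on the (possibly infinite) countable state space $\{1,2,\dots,n\}$. Suppose its distribution $\mathbf{r}(t)=(\mathbf{r}_i(t))_{i=1}^n=(\mathbb{P}(J(t)=i))_{i=1}^n\in\mathbb{R}^n$ satisfies $$\frac{d}{dt}\mathbf{r}(t)=R(t)\mathbf{r}(t),\quad t>0,$$ for some function $R(t):[0,\infty)\to\mathbb{R}^{n\times n}$, and $\mathbf{r}(t)=\Psi(t)\mathbf{r}(0)$ for $t\ge0$, where $\Psi(t):(-\infty,\infty)\to\mathbb{R}^{n\times n}$ satisfies $\Psi(t)\Psi(-t)=\mathrm{id}$ (the identity operator) for all $t\in(-\infty,\infty)$. Let $\{X(t)\}_{t\ge0}$ be a stochastic process taking values in the closure of an open set $V\subseteq\mathbb{R}^d$, whose probability density $q(x,t)\,dx=\mathbb{P}(X(t)=x)$ satisfies $$\frac{\partial}{\partial t}q=\mathcal{D}_t\mathcal{L}_x q,\quad x\in V,\ t>0,$$ where $\mathcal{L}_x$ is a linear operator acting only on functions of space $x\in V$ and $\mathcal{D}_t$ is a linear operator acting only on functions of time $t\in[0,\infty)$, in the sense that for real-valued functions $\varphi(t),\psi(t)$ in the domain of $\mathcal{D}_t$ and $f(x),g(x)$ in the domain of $\mathcal{L}_x$, $$\mathcal{L}_x(\varphi f+\psi g)=\varphi\,\mathcal{L}_x f+\psi\,\mathcal{L}_x g,\qquad \mathcal{D}_t(\varphi f+\psi g)=f\,\mathcal{D}_t\varphi+g\,\mathcal{D}_t\psi.$$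 If $X$ and $J$ are independent, then the joint probability density $\mathbf{p}(x,t)=(\mathbf{p}_i(x,t))_{i=1}^n$, defined by $\mathbf{p}_i(x,t)\,dx=\mathbb{P}(X(t)=x,\,J(t)=i)$, satisfies $$\frac{\partial}{\partial t}\mathbf{p}=\Psi(t)\,\mathcal{D}_t\Big[\Psi(-t)\,\mathcal{L}_x\mathbf{p}\Big]+R(t)\,\mathbf{p},\quad x\in V,\ t>0.$$
   Context: Motivating example: for subdiffusion one takes $\mathcal{D}_t={}_{0}D_{t}^{1-\alpha}$, the Riemann-Liouville fractional derivative ${}_{0}D_{t}^{1-\alpha}f(t)=\frac{1}{\Gamma(\alpha)}\frac{d}{dt}\int_0^t\frac{f(s)}{(t-s)^{1-\alpha}}\,ds$ with $\alpha\in(0,1)$, and $\mathcal{L}_x$ a (forward) Fokker-Planck operator such as $K_\alpha\frac{\partial^2}{\partial x^2}$; with constant $R$ and finite $n$, $\Psi(t)=e^{Rt}$ (matrix exponential). *)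

theory Defs
  imports "HOL-Probability.Probability"
begin

definition mat_vec :: "('j \<Rightarrow> 'j \<Rightarrow> real) \<Rightarrow> ('j \<Rightarrow> real) \<Rightarrow> 'j \<Rightarrow> real" where
  "mat_vec A v = (\<lambda>i. infsum (\<lambda>j. A i j * v j) UNIV)"

text \<open>Pointwise density: c is the density at x of the (sub-probability) law of Y
  restricted to the event E, i.e.  c dx = P(E, Y = x), read as the limit of
  P(E, Y in ball x eps) / vol(ball x eps) as eps tends to 0.\<close>
definition density_at ::
  "'w measure \<Rightarrow> ('w \<Rightarrow> bool) \<Rightarrow> ('w \<Rightarrow> 'a::euclidean_space) \<Rightarrow> 'a \<Rightarrow> real \<Rightarrow> bool" where
  "density_at M E Y x c \<longleftrightarrow>
     ((\<lambda>\<epsilon>. measure M {\<omega> \<in> space M. E \<omega> \<and> Y \<omega> \<in> ball x \<epsilon>} / measure lborel (ball x \<epsilon>))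
        \<longlongrightarrow> c) (at_right 0)"

end

theory Submission
  imports Defs
begin

text \<open>Independence of X and J factorises the joint density, \<open>p i x t = r t i * q x t\<close>.
  Since \<open>\<Psi>(-s) r(s) = r(0)\<close> does not depend on \<open>s\<close>, the time operator D only sees the
  factor \<open>L q\<close>, so the claimed right-hand side equals \<open>r(t) D(L q) + (R(t) r(t)) q\<close>: the
  product rule for \<open>r(t) q(x,t)\<close>. The factorisation holds pointwise wherever both densities
  exist.\<close>

lemma mat_vec_cmult_right:
  "mat_vec A (\<lambda>j. v j * c) i = mat_vec A v i * c"
  unfolding mat_vec_def by (simp add: infsum_cmult_left'[symmetric] mult.assoc)

lemma local_linear_op_cmult:
  fixes T :: "('a \<Rightarrow> real) \<Rightarrow> 'a \<Rightarrow> real"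
  assumes lin: "\<forall>f g a b. T (\<lambda>y. a * f y + b * g y) = (\<lambda>y. a * T f y + b * T g y)"
    and local: "\<forall>f g. (\<forall>y\<in>S. f y = g y) \<longrightarrow> (\<forall>y\<in>S. T f y = T g y)"
    and f: "\<forall>y\<in>S. f y = c * g y"
    and x: "x \<in> S"
  shows "T f x = c * T g x"
proof -
  have "T f x = T (\<lambda>y. c * g y + 0 * g y) x"
    using local f x by simp
  also have "\<dots> = c * T g x"
    by (simp only: lin[rule_format])
  finally show ?thesis .
qed

lemma density_at_unique:
  assumes "density_at M E Y x c" and "density_at M E Y x d"
  shows "c = d"
  using assms unfolding density_at_def
  by (rule tendsto_unique[OF trivial_limit_at_right_real])

lemma density_at_cmult:
  assumes "\<And>\<epsilon>. measure M {\<omega> \<in> space M. E \<omega> \<and> Y \<omega> \<in> ball x \<epsilon>}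
                 = a * measure M {\<omega> \<in> space M. F \<omega> \<and> Y \<omega> \<in> ball x \<epsilon>}"
    and "density_at M F Y x c"
  shows "density_at M E Y x (a * c)"
  using tendsto_mult[OF tendsto_const assms(2)[unfolded density_at_def], of a]
  unfolding density_at_def assms(1) by simp

lemma (in prob_space) indep_set_process_components:
  fixes X :: "'i \<Rightarrow> 'a \<Rightarrow> 'x" and J :: "'i \<Rightarrow> 'a \<Rightarrow> 'y"
  assumes indep: "indep_set
                  {(\<lambda>\<omega>. \<lambda>t\<in>I. X t \<omega>) -` S \<inter> space M | S. S \<in> sets (Pi\<^sub>M I (\<lambda>_. N))}
                  {(\<lambda>\<omega>. \<lambda>t\<in>I. J t \<omega>) -` S \<inter> space M | S. S \<in> sets (Pi\<^sub>M I (\<lambda>_. K))}"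
    and X: "\<And>s. s \<in> I \<Longrightarrow> X s \<in> measurable M N"
    and J: "\<And>s. s \<in> I \<Longrightarrow> J s \<in> measurable M K"
    and t: "t \<in> I" and A: "A \<in> sets N" and B: "B \<in> sets K"
  shows "prob {\<omega> \<in> space M. X t \<omega> \<in> A \<and> J t \<omega> \<in> B}
           = prob {\<omega> \<in> space M. X t \<omega> \<in> A} * prob {\<omega> \<in> space M. J t \<omega> \<in> B}"
proof -
  have component_event:
    "{\<omega> \<in> space M. Z t \<omega> \<in> C} \<in>
       {(\<lambda>\<omega>. \<lambda>t\<in>I. Z t \<omega>) -` S \<inter> space M | S. S \<in> sets (Pi\<^sub>M I (\<lambda>_. Q))}"
    if "\<And>s. s \<in> I \<Longrightarrow> Z s \<in> measurable M Q" and "C \<in> sets Q" for Z :: "'i \<Rightarrow> 'a \<Rightarrow> 'b" and C Q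
  proof -
    let ?S = "(\<lambda>f. f t) -` C \<inter> space (Pi\<^sub>M I (\<lambda>_. Q))"
    have "?S \<in> sets (Pi\<^sub>M I (\<lambda>_. Q))"
      by (rule measurable_sets[OF measurable_component_singleton[OF t] that(2)])
    moreover have "(\<lambda>\<omega>. \<lambda>t\<in>I. Z t \<omega>) -` ?S \<inter> space M = {\<omega> \<in> space M. Z t \<omega> \<in> C}"
      using t that(2) measurable_space[OF that(1)] by (auto simp: space_PiM)
    ultimately show ?thesis by blast
  qed
  have "{\<omega> \<in> space M. X t \<omega> \<in> A \<and> J t \<omega> \<in> B}
          = {\<omega> \<in> space M. X t \<omega> \<in> A} \<inter> {\<omega> \<in> space M. J t \<omega> \<in> B}" by auto
  then show ?thesis
    using indep_setD[OF indep component_event[OF X A] component_event[OF J B]] by simp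
qed

lemma (in prob_space) prob_fibres_summable_on:
  assumes Z: "Z \<in> measurable M (count_space UNIV)"
  shows "(\<lambda>i. prob {\<omega> \<in> space M. Z \<omega> = i}) summable_on UNIV"
proof (rule nonneg_bdd_above_summable_on)
  show "bdd_above (sum (\<lambda>i. prob {\<omega> \<in> space M. Z \<omega> = i}) ` {F. F \<subseteq> UNIV \<and> finite F})"
  proof (rule bdd_aboveI, safe)
    fix F :: "'b set" assume F: "finite F"
    have "(\<Sum>i\<in>F. prob {\<omega> \<in> space M. Z \<omega> = i}) = prob (\<Union>i\<in>F. {\<omega> \<in> space M. Z \<omega> = i})"
      using F Z by (intro finite_measure_finite_Union[symmetric])
        (auto simp: disjoint_family_on_def intro: measurable_sets_Collect)
    also have "\<dots> \<le> 1" by (rule prob_le_1)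
    finally show "(\<Sum>i\<in>F. prob {\<omega> \<in> space M. Z \<omega> = i}) \<le> 1" .
  qed
qed simp

lemma separable_solution_master_equation:
  fixes r :: "real \<Rightarrow> 'j \<Rightarrow> real" and p :: "'j \<Rightarrow> 'a \<Rightarrow> real \<Rightarrow> real"
    and L :: "('a \<Rightarrow> real) \<Rightarrow> 'a \<Rightarrow> real" and D :: "(real \<Rightarrow> real) \<Rightarrow> real \<Rightarrow> real"
  assumes p_prod: "\<And>s y j. s \<ge> 0 \<Longrightarrow> y \<in> V \<Longrightarrow> p j y s = r s j * q y s"
    and r_ode: "((\<lambda>s. r s i) has_real_derivative mat_vec (R t) (r t) i) (at t)"
    and q_pde: "((\<lambda>s. q x s) has_real_derivative D (\<lambda>s. L (\<lambda>y. q y s) x) t) (at t)"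
    and r_Psi: "r t = mat_vec (\<Psi> t) (r 0)"
    and Psi_r: "\<And>s. s \<ge> 0 \<Longrightarrow> mat_vec (\<Psi> (- s)) (r s) = r 0"
    and L_lin: "\<forall>f g a b. L (\<lambda>y. a * f y + b * g y) = (\<lambda>y. a * L f y + b * L g y)"
    and L_local: "\<forall>f g. (\<forall>y\<in>V. f y = g y) \<longrightarrow> (\<forall>y\<in>V. L f y = L g y)"
    and D_lin: "\<forall>\<phi> \<psi> a b. D (\<lambda>s. \<phi> s * a + \<psi> s * b) = (\<lambda>s. a * D \<phi> s + b * D \<psi> s)"
    and D_local: "\<forall>\<phi> \<psi>. (\<forall>s\<ge>0. \<phi> s = \<psi> s) \<longrightarrow> (\<forall>s\<ge>0. D \<phi> s = D \<psi> s)"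
    and t: "t > 0" and x: "x \<in> V"
  shows "((\<lambda>s. p i x s) has_real_derivative
            (mat_vec (\<Psi> t) (\<lambda>k. D (\<lambda>s. mat_vec (\<Psi> (- s)) (\<lambda>j. L (\<lambda>y. p j y s) x) k) t) i
             + mat_vec (R t) (\<lambda>j. p j x t) i)) (at t)"
proof -
  define Lq where "Lq = (\<lambda>s. L (\<lambda>y. q y s) x)"
  have Lp: "L (\<lambda>y. p j y s) x = r s j * Lq s" if "s \<ge> 0" for j s
    unfolding Lq_def using that x p_prod
    by (intro local_linear_op_cmult[OF L_lin L_local]) auto
  have D_lin': "\<forall>\<phi> \<psi> a b. D (\<lambda>s. a * \<phi> s + b * \<psi> s) = (\<lambda>s. a * D \<phi> s + b * D \<psi> s)"
    using D_lin by (simp add: mult.commute)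
  have D_local': "\<forall>\<phi> \<psi>. (\<forall>s\<in>{0..}. \<phi> s = \<psi> s) \<longrightarrow> (\<forall>s\<in>{0..}. D \<phi> s = D \<psi> s)"
    using D_local by simp
  have Dk: "D (\<lambda>s. mat_vec (\<Psi> (- s)) (\<lambda>j. L (\<lambda>y. p j y s) x) k) t = r 0 k * D Lq t" for k
  proof (rule local_linear_op_cmult[OF D_lin' D_local'])
    show "\<forall>s\<in>{0..}. mat_vec (\<Psi> (- s)) (\<lambda>j. L (\<lambda>y. p j y s) x) k = r 0 k * Lq s"
      using Lp Psi_r by (simp add: mat_vec_cmult_right)
  qed (use t in auto)
  have "((\<lambda>s. r s i * q x s) has_real_derivative
          mat_vec (R t) (r t) i * q x t + r t i * D Lq t) (at t)"
    using DERIV_mult[OF r_ode q_pde] unfolding Lq_def by (simp add: mult.commute)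
  then have "((\<lambda>s. p i x s) has_real_derivative
               mat_vec (R t) (r t) i * q x t + r t i * D Lq t) (at t)"
    by (rule has_field_derivative_transform_within_open[of _ _ _ "{0<..}"])
      (use t x p_prod in auto)
  moreover have "mat_vec (\<Psi> t) (\<lambda>k. D (\<lambda>s. mat_vec (\<Psi> (- s)) (\<lambda>j. L (\<lambda>y. p j y s) x) k) t) i
                 = r t i * D Lq t"
    by (simp add: Dk mat_vec_cmult_right r_Psi)
  moreover have "mat_vec (R t) (\<lambda>j. p j x t) i = mat_vec (R t) (r t) i * q x t"
    using p_prod t x by (simp add: mat_vec_cmult_right)
  ultimately show ?thesis by (simp only: add.commute)
qed

theorem theorem1:
  fixes M :: "'w measure"
    and J :: "real \<Rightarrow> 'w \<Rightarrow> 'j::countable"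
    and X :: "real \<Rightarrow> 'w \<Rightarrow> 'a::euclidean_space"
    and r :: "real \<Rightarrow> 'j \<Rightarrow> real"
    and R :: "real \<Rightarrow> 'j \<Rightarrow> 'j \<Rightarrow> real"
    and \<Psi> :: "real \<Rightarrow> 'j \<Rightarrow> 'j \<Rightarrow> real"
    and V :: "'a set"
    and q :: "'a \<Rightarrow> real \<Rightarrow> real"
    and p :: "'j \<Rightarrow> 'a \<Rightarrow> real \<Rightarrow> real"
    and L :: "('a \<Rightarrow> real) \<Rightarrow> ('a \<Rightarrow> real)"
    and D :: "(real \<Rightarrow> real) \<Rightarrow> (real \<Rightarrow> real)"
  assumes M: "prob_space M"
    and J_rv: "\<forall>t\<ge>0. J t \<in> measurable M (count_space UNIV)"
    and X_rv: "\<forall>t\<ge>0. X t \<in> borel_measurable M"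
    and r_def: "\<forall>t\<ge>0. \<forall>i. r t i = measure M {\<omega> \<in> space M. J t \<omega> = i}"
    and r_ode: "\<forall>t>0. \<forall>i. ((\<lambda>s. r s i) has_real_derivative mat_vec (R t) (r t) i) (at t)"
    and r_Psi: "\<forall>t\<ge>0. r t = mat_vec (\<Psi> t) (r 0)"
    and Psi_inv: "\<forall>t. \<forall>v. v summable_on UNIV \<longrightarrow> mat_vec (\<Psi> t) (mat_vec (\<Psi> (- t)) v) = v"
    and V_open: "open V"
    and X_range: "\<forall>t\<ge>0. \<forall>\<omega>\<in>space M. X t \<omega> \<in> closure V"
    and q_dens: "\<forall>t\<ge>0. \<forall>x\<in>V. density_at M (\<lambda>\<omega>. True) (X t) x (q x t)"
    and q_pde: "\<forall>t>0. \<forall>x\<in>V.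
                  ((\<lambda>s. q x s) has_real_derivative D (\<lambda>s. L (\<lambda>y. q y s) x) t) (at t)"
    and L_lin: "\<forall>f g a b. L (\<lambda>y. a * f y + b * g y) = (\<lambda>y. a * L f y + b * L g y)"
    and L_local: "\<forall>f g. (\<forall>y\<in>V. f y = g y) \<longrightarrow> (\<forall>y\<in>V. L f y = L g y)"
    and D_lin: "\<forall>\<phi> \<psi> a b. D (\<lambda>s. \<phi> s * a + \<psi> s * b) = (\<lambda>s. a * D \<phi> s + b * D \<psi> s)"
    and D_local: "\<forall>\<phi> \<psi>. (\<forall>s\<ge>0. \<phi> s = \<psi> s) \<longrightarrow> (\<forall>s\<ge>0. D \<phi> s = D \<psi> s)"
    and indep: "prob_space.indep_set M
                  {(\<lambda>\<omega>. \<lambda>t\<in>{0..}. X t \<omega>) -` S \<inter> space M | S.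
                     S \<in> sets (Pi\<^sub>M {0..} (\<lambda>_. borel))}
                  {(\<lambda>\<omega>. \<lambda>t\<in>{0..}. J t \<omega>) -` S \<inter> space M | S.
                     S \<in> sets (Pi\<^sub>M {0..} (\<lambda>_. count_space UNIV))}"
    and p_dens: "\<forall>t\<ge>0. \<forall>x\<in>V. \<forall>i. density_at M (\<lambda>\<omega>. J t \<omega> = i) (X t) x (p i x t)"
  shows "\<forall>t>0. \<forall>x\<in>V. \<forall>i.
           ((\<lambda>s. p i x s) has_real_derivative
              (mat_vec (\<Psi> t)
                 (\<lambda>k. D (\<lambda>s. mat_vec (\<Psi> (- s)) (\<lambda>j. L (\<lambda>y. p j y s) x) k) t) i
               + mat_vec (R t) (\<lambda>j. p j x t) i)) (at t)"
proof (intro allI impI ballI)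
  interpret prob_space M by (rule M)
  have p_prod: "p i x t = r t i * q x t" if t: "t \<ge> 0" and x: "x \<in> V" for t x i
  proof (rule density_at_unique)
    show "density_at M (\<lambda>\<omega>. J t \<omega> = i) (X t) x (p i x t)" using p_dens t x by blast
    show "density_at M (\<lambda>\<omega>. J t \<omega> = i) (X t) x (r t i * q x t)"
    proof (rule density_at_cmult)
      show "density_at M (\<lambda>\<omega>. True) (X t) x (q x t)" using q_dens t x by blast
      show "measure M {\<omega> \<in> space M. J t \<omega> = i \<and> X t \<omega> \<in> ball x \<epsilon>}
              = r t i * measure M {\<omega> \<in> space M. True \<and> X t \<omega> \<in> ball x \<epsilon>}" for \<epsilon>
        using indep_set_process_components[OF indep, of t "ball x \<epsilon>" "{i}"] X_rv J_rv r_def t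
        by (simp add: conj_commute mult.commute)
    qed
  qed
  have "r 0 = (\<lambda>i. prob {\<omega> \<in> space M. J 0 \<omega> = i})"
    using r_def by auto
  then have "r 0 summable_on UNIV"
    using prob_fibres_summable_on[of "J 0"] J_rv by simp
  then have Psi_r: "mat_vec (\<Psi> (- s)) (r s) = r 0" if "s \<ge> 0" for s
    using Psi_inv[rule_format, of "r 0" "- s"] r_Psi[rule_format, OF that] by simp
  fix t :: real and x i assume t: "t > 0" and x: "x \<in> V"
  show "((\<lambda>s. p i x s) has_real_derivative
              (mat_vec (\<Psi> t)
                 (\<lambda>k. D (\<lambda>s. mat_vec (\<Psi> (- s)) (\<lambda>j. L (\<lambda>y. p j y s) x) k) t) i
               + mat_vec (R t) (\<lambda>j. p j x t) i)) (at t)"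
    by (rule separable_solution_master_equation[where r = r and q = q])
      (assumption | rule p_prod Psi_r L_lin L_local D_lin D_local t x r_ode[rule_format, OF t]
        q_pde[rule_format, OF t x] r_Psi[rule_format, OF less_imp_le[OF t]])+
qed

end
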